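(* Assume Assumption A holds for the transition function $p$. Then for every $\delta\in(0,1)$, the set $NE_\delta$ of Nash equilibrium payoffs of the $\delta$-discounted dynamic sender-receiver game satisfies $NE_\delta\subseteq E(\mathcal{M})$.
   Context: A dynamic sender-receiver game is given by: finite sets $S$ (states), $A=S$ (messages) and $B$ (actions of the receiver); a payoff function $u=(u^1,u^2):S\times B\to\mathbb{R}^2$ (player 1 = sender, player 2 = receiver), extended to mixed actions linearly; and an irreducible aperiodic Markov chain on $S$ with transition function $p(\cdot\mid\cdot)$ and invariant measure $m\in\Delta(S)$. The states $(s_n)_{n\ge1}$ follow this chain with $s_1\sim m$. At each stage $n$ the sender observes $s_n$ and announces $a_n\in A$; the receiver observes $a_n$ and chooses $b_n\in B$; $b_n$ is publicly disclosed; payoffs are not observed. A sender strategy is a map $\sigma:\bigcup_{n\ge0}(S\times A\times B)^n\times S\to\Delta(A)$, a receiver strategy a map $\tau:\bigcup_{n\ge0}(A\times B)^n\to\Delta(B)$; payoffs are $\gamma_\delta(\sigma,\tau)=\mathbf{E}_{\sigma,\tau}[\sum_{n\ge1}(1-\delta)\delta^{n-1}u(s_n,b_n)]$. Assumption A: there exist nonnegative numbers $\alpha_s$, $s\in S$, with $\sum_{s\in S\setminus\{\bar s\}}\alpha_s\le1$ for every $\bar s\in S$, such that $p(s'\mid s)=\alpha_{s'}$ whenever $s'\neq s$. $\mathcal{M}\subset\Delta(S\times A)$ is the set of distributions on $S\times A$ both of whose marginals equal $m$; $\mu_0(s,s)=m(s)$, $\mu_0(s,a)=0$ for $s\ne a$.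 For $\mu\in\mathcal{M}$ and $y:A\to\Delta(B)$, $U(\mu,y)=\sum_{s,a}\mu(s,a)u(s,y(\cdot\mid a))$; $v^2=\max_{b\in B}\sum_s m(s)u^2(s,b)$. $E(\mathcal{M})$ is the set of vectors $U(\mu_0,y)$, $y:A\to\Delta(B)$, such that $U^1(\mu_0,y)\ge U^1(\mu,y)$ for every $\mu\in\mathcal{M}$ and $U^2(\mu_0,y)\ge v^2$. *)

theory Defs
  imports Complex_Main
begin

text \<open>States and messages both have type 's (A = S); receiver actions have type 'b.
  A transition function p s s' stands for p(s' | s).\<close>

definition stochastic_matrix :: "('s::finite \<Rightarrow> 's \<Rightarrow> real) \<Rightarrow> bool" where
  "stochastic_matrix p \<longleftrightarrow> (\<forall>s s'. 0 \<le> p s s') \<and> (\<forall>s. (\<Sum>s'\<in>UNIV. p s s') = 1)"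

fun nstep :: "('s::finite \<Rightarrow> 's \<Rightarrow> real) \<Rightarrow> nat \<Rightarrow> 's \<Rightarrow> 's \<Rightarrow> real" where
  "nstep p 0 s s' = (if s = s' then 1 else 0)"
| "nstep p (Suc n) s s' = (\<Sum>t\<in>UNIV. nstep p n s t * p t s')"

definition irreducible_chain :: "('s::finite \<Rightarrow> 's \<Rightarrow> real) \<Rightarrow> bool" where
  "irreducible_chain p \<longleftrightarrow> (\<forall>s s'. \<exists>n>0. nstep p n s s' > 0)"

definition aperiodic_chain :: "('s::finite \<Rightarrow> 's \<Rightarrow> real) \<Rightarrow> bool" where
  "aperiodic_chain p \<longleftrightarrow> (\<forall>s. Gcd {n. n > 0 \<and> nstep p n s s > 0} = 1)"

definition distribution :: "('a::finite \<Rightarrow> real) \<Rightarrow> bool" where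
  "distribution q \<longleftrightarrow> (\<forall>x. 0 \<le> q x) \<and> (\<Sum>x\<in>UNIV. q x) = 1"

definition invariant_measure :: "('s::finite \<Rightarrow> 's \<Rightarrow> real) \<Rightarrow> ('s \<Rightarrow> real) \<Rightarrow> bool" where
  "invariant_measure p m \<longleftrightarrow> distribution m \<and> (\<forall>s'. (\<Sum>s\<in>UNIV. m s * p s s') = m s')"

definition assumption_A :: "('s::finite \<Rightarrow> 's \<Rightarrow> real) \<Rightarrow> bool" where
  "assumption_A p \<longleftrightarrow> (\<exists>\<alpha>::'s \<Rightarrow> real. (\<forall>s. 0 \<le> \<alpha> s)
      \<and> (\<forall>sb. (\<Sum>s\<in>UNIV - {sb}. \<alpha> s) \<le> 1)
      \<and> (\<forall>s s'. s' \<noteq> s \<longrightarrow> p s s' = \<alpha> s'))"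

text \<open>Histories: lists of (state, message, action) triples. A sender strategy maps a past
  history and the current state to a distribution over messages; a receiver strategy maps the
  past public history of (message, action) pairs and the current message to a distribution over
  actions.\<close>

type_synonym ('s,'b) sender_strategy = "('s \<times> 's \<times> 'b) list \<Rightarrow> 's \<Rightarrow> 's \<Rightarrow> real"
type_synonym ('s,'b) receiver_strategy = "('s \<times> 'b) list \<Rightarrow> 's \<Rightarrow> 'b \<Rightarrow> real"

definition sender_strategy :: "('s::finite,'b) sender_strategy \<Rightarrow> bool" where
  "sender_strategy \<sigma> \<longleftrightarrow> (\<forall>h s. distribution (\<sigma> h s))"

definition receiver_strategy :: "('s,'b::finite) receiver_strategy \<Rightarrow> bool" where
  "receiver_strategy \<tau> \<longleftrightarrow> (\<forall>h a. distribution (\<tau> h a))"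

definition public_hist :: "('s \<times> 's \<times> 'b) list \<Rightarrow> ('s \<times> 'b) list" where
  "public_hist h = map (\<lambda>(s,a,b). (a,b)) h"

definition hist_prob ::
  "('s::finite \<Rightarrow> 's \<Rightarrow> real) \<Rightarrow> ('s \<Rightarrow> real) \<Rightarrow> ('s,'b) sender_strategy \<Rightarrow> ('s,'b) receiver_strategy
     \<Rightarrow> ('s \<times> 's \<times> 'b) list \<Rightarrow> real" where
  "hist_prob p m \<sigma> \<tau> h = (\<Prod>k<length h.
      (if k = 0 then m (fst (h ! 0)) else p (fst (h ! (k - 1))) (fst (h ! k)))
      * \<sigma> (take k h) (fst (h ! k)) (fst (snd (h ! k)))
      * \<tau> (public_hist (take k h)) (fst (snd (h ! k))) (snd (snd (h ! k))))"

text \<open>Expected stage payoff at stage n+1 and the discounted payoff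
  E[sum_{n>=1} (1-delta) delta^(n-1) u(s_n,b_n)], written (by linearity, payoffs bounded)
  as the series of the expected stage payoffs.\<close>

definition stage_payoff ::
  "('s::finite \<Rightarrow> 's \<Rightarrow> real) \<Rightarrow> ('s \<Rightarrow> real) \<Rightarrow> ('s \<Rightarrow> 'b::finite \<Rightarrow> real)
     \<Rightarrow> ('s,'b) sender_strategy \<Rightarrow> ('s,'b) receiver_strategy \<Rightarrow> nat \<Rightarrow> real" where
  "stage_payoff p m v \<sigma> \<tau> n =
     (\<Sum>h\<in>{h :: ('s \<times> 's \<times> 'b) list. length h = Suc n}.
        hist_prob p m \<sigma> \<tau> h * v (fst (last h)) (snd (snd (last h))))"

definition disc_payoff ::
  "('s::finite \<Rightarrow> 's \<Rightarrow> real) \<Rightarrow> ('s \<Rightarrow> real) \<Rightarrow> real \<Rightarrow> ('s \<Rightarrow> 'b::finite \<Rightarrow> real)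
     \<Rightarrow> ('s,'b) sender_strategy \<Rightarrow> ('s,'b) receiver_strategy \<Rightarrow> real" where
  "disc_payoff p m \<delta> v \<sigma> \<tau> = (\<Sum>n. (1 - \<delta>) * \<delta> ^ n * stage_payoff p m v \<sigma> \<tau> n)"

definition nash_eq ::
  "('s::finite \<Rightarrow> 's \<Rightarrow> real) \<Rightarrow> ('s \<Rightarrow> real) \<Rightarrow> real \<Rightarrow> ('s \<Rightarrow> 'b::finite \<Rightarrow> real) \<Rightarrow> ('s \<Rightarrow> 'b \<Rightarrow> real)
     \<Rightarrow> ('s,'b) sender_strategy \<Rightarrow> ('s,'b) receiver_strategy \<Rightarrow> bool" where
  "nash_eq p m \<delta> u1 u2 \<sigma> \<tau> \<longleftrightarrow> sender_strategy \<sigma> \<and> receiver_strategy \<tau>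
     \<and> (\<forall>\<sigma>'. sender_strategy \<sigma>' \<longrightarrow> disc_payoff p m \<delta> u1 \<sigma>' \<tau> \<le> disc_payoff p m \<delta> u1 \<sigma> \<tau>)
     \<and> (\<forall>\<tau>'. receiver_strategy \<tau>' \<longrightarrow> disc_payoff p m \<delta> u2 \<sigma> \<tau>' \<le> disc_payoff p m \<delta> u2 \<sigma> \<tau>)"

definition NE ::
  "('s::finite \<Rightarrow> 's \<Rightarrow> real) \<Rightarrow> ('s \<Rightarrow> real) \<Rightarrow> real \<Rightarrow> ('s \<Rightarrow> 'b::finite \<Rightarrow> real) \<Rightarrow> ('s \<Rightarrow> 'b \<Rightarrow> real)
     \<Rightarrow> (real \<times> real) set" where
  "NE p m \<delta> u1 u2 = {(disc_payoff p m \<delta> u1 \<sigma> \<tau>, disc_payoff p m \<delta> u2 \<sigma> \<tau>) | \<sigma> \<tau>.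
      nash_eq p m \<delta> u1 u2 \<sigma> \<tau>}"

definition Mset :: "('s::finite \<Rightarrow> real) \<Rightarrow> ('s \<Rightarrow> 's \<Rightarrow> real) set" where
  "Mset m = {\<mu>. (\<forall>s a. 0 \<le> \<mu> s a) \<and> (\<forall>s. (\<Sum>a\<in>UNIV. \<mu> s a) = m s)
                \<and> (\<forall>a. (\<Sum>s\<in>UNIV. \<mu> s a) = m a)}"

definition mu0 :: "('s \<Rightarrow> real) \<Rightarrow> 's \<Rightarrow> 's \<Rightarrow> real" where
  "mu0 m s a = (if s = a then m s else 0)"

definition Upay :: "('s::finite \<Rightarrow> 'b::finite \<Rightarrow> real) \<Rightarrow> ('s \<Rightarrow> 's \<Rightarrow> real) \<Rightarrow> ('s \<Rightarrow> 'b \<Rightarrow> real) \<Rightarrow> real" where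
  "Upay v \<mu> y = (\<Sum>s\<in>UNIV. \<Sum>a\<in>UNIV. \<mu> s a * (\<Sum>b\<in>UNIV. y a b * v s b))"

definition v2 :: "('s::finite \<Rightarrow> real) \<Rightarrow> ('s \<Rightarrow> 'b::finite \<Rightarrow> real) \<Rightarrow> real" where
  "v2 m u2 = Max (range (\<lambda>b. \<Sum>s\<in>UNIV. m s * u2 s b))"

definition EM :: "('s::finite \<Rightarrow> real) \<Rightarrow> ('s \<Rightarrow> 'b::finite \<Rightarrow> real) \<Rightarrow> ('s \<Rightarrow> 'b \<Rightarrow> real)
     \<Rightarrow> (real \<times> real) set" where
  "EM m u1 u2 = {(Upay u1 (mu0 m) y, Upay u2 (mu0 m) y) | y.
      (\<forall>a. distribution (y a))
      \<and> (\<forall>\<mu>\<in>Mset m. Upay u1 \<mu> y \<le> Upay u1 (mu0 m) y)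
      \<and> Upay u2 (mu0 m) y \<ge> v2 m u2}"

end

theory Submission
  imports Defs
begin

text \<open>Under Assumption A the transition function is lazy: p(s' | s) = c m(s') + (1 - c) [s = s'],
  i.e. the chain either stays or resamples from its invariant measure m. Consequently, for every
  \<mu> \<in> M, the posterior kernel \<kappa>(x, t) = \<mu>(t, x) / m(x) of the true state t given the
  message x commutes with p.

  Fix a Nash equilibrium (\<sigma>, \<tau>) and let y(. | a) be the discounted law of the receiver's
  action given that the current state is a. Under truthful reporting mu_0 this y reproduces the
  equilibrium payoffs. The receiver can secure v^2 by always playing one best action, so
  U^2(mu_0, y) \<ge> v^2. For \<mu> \<in> M the sender can run a fictitious state process x_n, coupled
  with the true states so that (x_n) is again a p-chain and, given the fictitious path, the true
  state s_n has law \<kappa>(x_n, .); this coupling exists precisely because \<kappa> commutes with p.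
  Playing \<sigma> as if x_n were the state yields exactly U^1(\<mu>, y), which by the equilibrium
  property is at most U^1(mu_0, y).\<close>

lemma finite_lists_length: "finite {h::'a::finite list. length h = n}"
  using finite_lists_length_eq[of "UNIV::'a set" n] by simp

lemma lists_length_0: "{h. length h = 0} = {[]}"
  by auto

lemma sum_lists_length_Suc:
  fixes f :: "'a::finite list \<Rightarrow> 'b::comm_monoid_add"
  shows "(\<Sum>h\<in>{h. length h = Suc n}. f h) = (\<Sum>h\<in>{h. length h = n}. \<Sum>t\<in>UNIV. f (h @ [t]))"
proof -
  let ?snoc = "\<lambda>(h, t). h @ [t]"
  have bij: "bij_betw ?snoc ({h::'a list. length h = n} \<times> UNIV) {h. length h = Suc n}"
  proof (rule bij_betw_imageI)
    show "inj_on ?snoc ({h. length h = n} \<times> UNIV)"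
      by (auto simp: inj_on_def)
    show "?snoc ` ({h. length h = n} \<times> UNIV) = {h. length h = Suc n}"
      by (auto simp: image_iff length_Suc_conv_rev)
  qed
  show ?thesis
    by (simp add: sum.reindex_bij_betw[OF bij, symmetric] sum.cartesian_product' split_def)
qed

lemma sum_lists_length_zip:
  fixes f :: "('a::finite \<times> 'b::finite) list \<Rightarrow> 'c::comm_monoid_add"
  shows "(\<Sum>h\<in>{h. length h = n}. f h) =
    (\<Sum>xs\<in>{xs::'a list. length xs = n}. \<Sum>ys\<in>{ys::'b list. length ys = n}. f (zip xs ys))"
proof -
  let ?zip = "\<lambda>(xs, ys). zip xs ys"
  let ?A = "{xs::'a list. length xs = n}" and ?B = "{ys::'b list. length ys = n}"
  have bij: "bij_betw ?zip (?A \<times> ?B) {h. length h = n}"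
  proof (rule bij_betw_imageI)
    show "inj_on ?zip (?A \<times> ?B)"
      by (auto simp: inj_on_def zip_eq_conv)
    show "?zip ` (?A \<times> ?B) = {h. length h = n}"
    proof (intro equalityI subsetI)
      fix h :: "('a \<times> 'b) list" assume "h \<in> {h. length h = n}"
      then show "h \<in> ?zip ` (?A \<times> ?B)"
        by (auto simp: image_iff zip_map_fst_snd intro!: exI[of _ "map fst h"] exI[of _ "map snd h"])
    qed auto
  qed
  show ?thesis
    by (simp add: sum.reindex_bij_betw[OF bij, symmetric] sum.cartesian_product' split_def)
qed

lemma sum_lists_length_Suc_zip:
  fixes g :: "('a::finite \<times> 'b::finite \<times> 'c::finite) list \<Rightarrow> real"
  shows "(\<Sum>h\<in>{h. length h = Suc n}. g h * f (fst (last h)) (snd (snd (last h)))) =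
    (\<Sum>xs\<in>{xs. length xs = Suc n}. \<Sum>ys\<in>{ys. length ys = Suc n}. g (zip xs ys) * f (last xs) (snd (last ys)))"
proof (subst sum_lists_length_zip, intro sum.cong refl)
  fix xs :: "'a list" and ys :: "('b \<times> 'c) list"
  assume "xs \<in> {xs. length xs = Suc n}" "ys \<in> {ys. length ys = Suc n}"
  then have "last (zip xs ys) = (last xs, last ys)"
    by (intro last_zip) auto
  then show "g (zip xs ys) * f (fst (last (zip xs ys))) (snd (snd (last (zip xs ys))))
      = g (zip xs ys) * f (last xs) (snd (last ys))"
    by simp
qed

lemma sum_UNIV_prod: "(\<Sum>t\<in>(UNIV::('a::finite \<times> 'b::finite) set). f t) = (\<Sum>x\<in>UNIV. \<Sum>y\<in>UNIV. f (x, y))"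
  using sum.cartesian_product'[of f "UNIV::'a set" "UNIV::'b set"] by simp

lemma distribution_le_1: "distribution q \<Longrightarrow> q x \<le> 1"
  unfolding distribution_def by (metis finite_UNIV member_le_sum UNIV_I)

lemma sender_strategy_nonneg: "sender_strategy \<sigma> \<Longrightarrow> 0 \<le> \<sigma> h s a"
  by (simp add: sender_strategy_def distribution_def)

lemma sender_strategy_le_1: "sender_strategy \<sigma> \<Longrightarrow> \<sigma> h s a \<le> 1"
  by (simp add: sender_strategy_def distribution_le_1)

lemma sum_sender_strategy: "sender_strategy \<sigma> \<Longrightarrow> (\<Sum>a\<in>UNIV. \<sigma> h s a) = 1"
  by (simp add: sender_strategy_def distribution_def)

lemma receiver_strategy_nonneg: "receiver_strategy \<tau> \<Longrightarrow> 0 \<le> \<tau> h a b"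
  by (simp add: receiver_strategy_def distribution_def)

lemma sum_receiver_strategy: "receiver_strategy \<tau> \<Longrightarrow> (\<Sum>b\<in>UNIV. \<tau> h a b) = 1"
  by (simp add: receiver_strategy_def distribution_def)

lemma public_hist_eq_map_snd: "public_hist h = map snd h"
  by (auto simp: public_hist_def intro!: map_cong)

lemma hist_prob_Nil [simp]: "hist_prob p m \<sigma> \<tau> [] = 1"
  by (simp add: hist_prob_def)

lemma hist_prob_snoc:
  "hist_prob p m \<sigma> \<tau> (h @ [(s, a, b)]) = hist_prob p m \<sigma> \<tau> h *
     ((if h = [] then m s else p (fst (last h)) s) * \<sigma> h s a * \<tau> (public_hist h) a b)"
proof -
  let ?h' = "h @ [(s, a, b)]"
  have prefix: "(\<Prod>k<length h. (if k = 0 then m (fst (?h' ! 0)) else p (fst (?h' ! (k - 1))) (fst (?h' ! k)))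
      * \<sigma> (take k ?h') (fst (?h' ! k)) (fst (snd (?h' ! k)))
      * \<tau> (public_hist (take k ?h')) (fst (snd (?h' ! k))) (snd (snd (?h' ! k))))
    = hist_prob p m \<sigma> \<tau> h"
    unfolding hist_prob_def by (rule prod.cong) (auto simp: nth_append)
  show ?thesis
    unfolding hist_prob_def[of p m \<sigma> \<tau> ?h'] length_append_singleton prod.lessThan_Suc prefix
    by (cases "h = []") (simp_all add: nth_append last_conv_nth)
qed

definition path_prob :: "('s::finite \<Rightarrow> 's \<Rightarrow> real) \<Rightarrow> ('s \<Rightarrow> real) \<Rightarrow> 's list \<Rightarrow> real" where
  "path_prob p m ss = (\<Prod>k<length ss. if k = 0 then m (ss ! 0) else p (ss ! (k - 1)) (ss ! k))"

lemma path_prob_Nil [simp]: "path_prob p m [] = 1"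
  by (simp add: path_prob_def)

lemma path_prob_snoc:
  "path_prob p m (ss @ [s]) = path_prob p m ss * (if ss = [] then m s else p (last ss) s)"
proof -
  have prefix: "(\<Prod>k<length ss. if k = 0 then m ((ss @ [s]) ! 0)
      else p ((ss @ [s]) ! (k - 1)) ((ss @ [s]) ! k)) = path_prob p m ss"
    unfolding path_prob_def by (rule prod.cong) (auto simp: nth_append)
  show ?thesis
    unfolding path_prob_def[of p m "ss @ [s]"] length_append_singleton prod.lessThan_Suc prefix
    by (cases "ss = []") (simp_all add: nth_append last_conv_nth)
qed

text \<open>The strategic factor of a history probability: the chain is switched off.\<close>

definition strategy_prob ::
  "('s::finite, 'b) sender_strategy \<Rightarrow> ('s, 'b) receiver_strategy \<Rightarrow> ('s \<times> 's \<times> 'b) list \<Rightarrow> real" where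
  "strategy_prob \<sigma> \<tau> h = hist_prob (\<lambda>_ _. 1) (\<lambda>_. 1) \<sigma> \<tau> h"

lemma strategy_prob_snoc:
  "strategy_prob \<sigma> \<tau> (h @ [(s, a, b)]) = strategy_prob \<sigma> \<tau> h * (\<sigma> h s a * \<tau> (map snd h) a b)"
  unfolding strategy_prob_def hist_prob_snoc public_hist_eq_map_snd by simp

lemma hist_prob_eq_path_prob_mult:
  "hist_prob p m \<sigma> \<tau> h = path_prob p m (map fst h) * strategy_prob \<sigma> \<tau> h"
proof (induction h rule: rev_induct)
  case Nil
  then show ?case by (simp add: strategy_prob_def)
next
  case (snoc x h)
  obtain s a b where x: "x = (s, a, b)" by (cases x)
  show ?case
    using snoc unfolding x hist_prob_snoc strategy_prob_snoc
    by (simp add: path_prob_snoc public_hist_eq_map_snd last_map)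
qed

lemma strategy_prob_nonneg:
  assumes "sender_strategy \<sigma>" "receiver_strategy \<tau>"
  shows "0 \<le> strategy_prob \<sigma> \<tau> h"
  unfolding strategy_prob_def hist_prob_def
  by (intro prod_nonneg) (auto intro!: mult_nonneg_nonneg
      sender_strategy_nonneg[OF assms(1)] receiver_strategy_nonneg[OF assms(2)])

lemma sum_pair_indicator:
  fixes f :: "'a::finite \<Rightarrow> 'b::finite \<Rightarrow> 'c::semiring_1"
  shows "(\<Sum>s\<in>UNIV. \<Sum>b\<in>UNIV. f s b * of_bool (s' = s \<and> b' = b)) = f s' b'"
proof -
  have "(\<Sum>s\<in>UNIV. \<Sum>b\<in>UNIV. f s b * of_bool (s' = s \<and> b' = b))
      = (\<Sum>s\<in>UNIV. if s = s' then f s b' else 0)"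
    by (intro sum.cong refl) (auto simp: of_bool_def if_distrib cong: if_cong)
  then show ?thesis by simp
qed

lemma stage_payoff_eq_sum_indicator:
  "stage_payoff p m f \<sigma> \<tau> n =
    (\<Sum>s\<in>UNIV. \<Sum>b\<in>UNIV. f s b * stage_payoff p m (\<lambda>s' b'. of_bool (s' = s \<and> b' = b)) \<sigma> \<tau> n)"
proof -
  let ?H = "{h::('a \<times> 'a \<times> 'b) list. length h = Suc n}"
  let ?g = "\<lambda>s b h. hist_prob p m \<sigma> \<tau> h * (f s b * of_bool (fst (last h) = s \<and> snd (snd (last h)) = b))"
  have "(\<Sum>s\<in>UNIV. \<Sum>b\<in>UNIV. f s b * stage_payoff p m (\<lambda>s' b'. of_bool (s' = s \<and> b' = b)) \<sigma> \<tau> n)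
      = (\<Sum>s\<in>UNIV. \<Sum>b\<in>UNIV. \<Sum>h\<in>?H. ?g s b h)"
    by (simp add: stage_payoff_def sum_distrib_left mult_ac)
  also have "\<dots> = (\<Sum>h\<in>?H. \<Sum>s\<in>UNIV. \<Sum>b\<in>UNIV. ?g s b h)"
    by (subst sum.swap) (simp add: sum.swap[of _ UNIV ?H])
  also have "\<dots> = stage_payoff p m f \<sigma> \<tau> n"
    unfolding stage_payoff_def sum_distrib_left[symmetric] sum_pair_indicator ..
  finally show ?thesis ..
qed

locale stationary_chain =
  fixes p :: "'s::finite \<Rightarrow> 's \<Rightarrow> real" and m :: "'s \<Rightarrow> real"
  assumes stochastic: "stochastic_matrix p" and invariant: "invariant_measure p m"
begin

lemma p_nonneg: "0 \<le> p s t"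
  using stochastic by (simp add: stochastic_matrix_def)

lemma sum_p: "(\<Sum>t\<in>UNIV. p s t) = 1"
  using stochastic by (simp add: stochastic_matrix_def)

lemma m_nonneg: "0 \<le> m s"
  using invariant by (simp add: invariant_measure_def distribution_def)

lemma sum_m: "(\<Sum>s\<in>UNIV. m s) = 1"
  using invariant by (simp add: invariant_measure_def distribution_def)

lemma sum_m_mult_p: "(\<Sum>s\<in>UNIV. m s * p s t) = m t"
  using invariant by (simp add: invariant_measure_def)

lemma assumption_A_lazy_form:
  assumes "assumption_A p"
  obtains c where "\<And>t t'. p t t' = c * m t' + (if t = t' then 1 - c else 0)"
proof -
  obtain \<alpha> where \<alpha>: "\<And>s s'. s' \<noteq> s \<Longrightarrow> p s s' = \<alpha> s'"
    using assms by (auto simp: assumption_A_def)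
  define c where "c = (\<Sum>s\<in>UNIV. \<alpha> s)"
  have diag: "p t t = 1 - c + \<alpha> t" for t
  proof -
    have "1 = p t t + (\<Sum>s\<in>UNIV - {t}. p t s)"
      using sum_p[of t] by (simp add: sum.remove[of UNIV t])
    also have "(\<Sum>s\<in>UNIV - {t}. p t s) = (\<Sum>s\<in>UNIV - {t}. \<alpha> s)"
      using \<alpha> by (intro sum.cong) auto
    also have "\<dots> = c - \<alpha> t"
      by (simp add: c_def sum_diff1)
    finally show ?thesis by simp
  qed
  have "\<alpha> s' = c * m s'" for s'
  proof -
    have "m s' = m s' * p s' s' + (\<Sum>s\<in>UNIV - {s'}. m s * p s s')"
      using sum_m_mult_p[of s'] by (simp add: sum.remove[of UNIV s'])
    also have "(\<Sum>s\<in>UNIV - {s'}. m s * p s s') = (1 - m s') * \<alpha> s'"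
      using \<alpha> sum_m by (simp add: sum_distrib_right[symmetric] sum_diff1)
    finally show ?thesis
      using diag[of s'] by (simp add: algebra_simps)
  qed
  then show thesis
    using that \<alpha> diag by (metis add.commute add_0)
qed

lemma hist_prob_nonneg:
  assumes "sender_strategy \<sigma>" "receiver_strategy \<tau>"
  shows "0 \<le> hist_prob p m \<sigma> \<tau> h"
  unfolding hist_prob_def
  by (intro prod_nonneg) (auto intro!: mult_nonneg_nonneg p_nonneg m_nonneg
      sender_strategy_nonneg[OF assms(1)] receiver_strategy_nonneg[OF assms(2)])

lemma stage_payoff_state_fun:
  assumes \<sigma>: "sender_strategy \<sigma>" and \<tau>: "receiver_strategy \<tau>"
  shows "stage_payoff p m (\<lambda>s b. g s) \<sigma> \<tau> n = (\<Sum>s\<in>UNIV. m s * g s)"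
proof (induction n arbitrary: g)
  case 0
  have "stage_payoff p m (\<lambda>s b. g s) \<sigma> \<tau> 0
      = (\<Sum>s\<in>UNIV. \<Sum>a\<in>UNIV. \<Sum>b\<in>UNIV. m s * g s * (\<sigma> [] s a * \<tau> [] a b))"
    unfolding stage_payoff_def sum_lists_length_Suc lists_length_0 sum_UNIV_prod
    using hist_prob_snoc[of p m \<sigma> \<tau> "[]"] by (simp add: public_hist_def mult_ac)
  also have "\<dots> = (\<Sum>s\<in>UNIV. m s * g s)"
    by (simp add: sum_distrib_left[symmetric] sum_sender_strategy[OF \<sigma>] sum_receiver_strategy[OF \<tau>])
  finally show ?case .
  next
  case (Suc n)
  let ?H = "{h. length h = Suc n}"
  have "stage_payoff p m (\<lambda>s b. g s) \<sigma> \<tau> (Suc n) = (\<Sum>h\<in>?H. \<Sum>s\<in>UNIV. \<Sum>a\<in>UNIV. \<Sum>b\<in>UNIV.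
      hist_prob p m \<sigma> \<tau> h * p (fst (last h)) s * g s * (\<sigma> h s a * \<tau> (public_hist h) a b))"
    unfolding stage_payoff_def sum_lists_length_Suc[of _ "Suc n"] sum_UNIV_prod
    by (intro sum.cong refl) (auto simp: hist_prob_snoc mult_ac)
  also have "\<dots> = (\<Sum>h\<in>?H. hist_prob p m \<sigma> \<tau> h * (\<Sum>s\<in>UNIV. p (fst (last h)) s * g s))"
    by (simp add: sum_distrib_left[symmetric] mult.assoc sum_sender_strategy[OF \<sigma>] sum_receiver_strategy[OF \<tau>])
  also have "\<dots> = stage_payoff p m (\<lambda>t b. \<Sum>s\<in>UNIV. p t s * g s) \<sigma> \<tau> n"
    by (simp add: stage_payoff_def)
  also have "\<dots> = (\<Sum>t\<in>UNIV. m t * (\<Sum>s\<in>UNIV. p t s * g s))"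
    by (rule Suc.IH)
  also have "\<dots> = (\<Sum>s\<in>UNIV. (\<Sum>t\<in>UNIV. m t * p t s) * g s)"
    unfolding sum_distrib_left sum_distrib_right by (subst sum.swap) (simp add: mult_ac)
  finally show ?case
    by (simp add: sum_m_mult_p)
qed

lemma hist_prob_null_state:
  assumes \<sigma>: "sender_strategy \<sigma>" and \<tau>: "receiver_strategy \<tau>"
    and h: "length h = Suc n" and null: "m (fst (last h)) = 0"
  shows "hist_prob p m \<sigma> \<tau> h = 0"
proof -
  let ?g = "\<lambda>s. if m s = 0 then 1 else 0 :: real"
  have "(\<Sum>s\<in>UNIV. m s * ?g s) = 0"
    by (rule sum.neutral) simp
  then have "(\<Sum>h\<in>{h. length h = Suc n}. hist_prob p m \<sigma> \<tau> h * ?g (fst (last h))) = 0"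
    using stage_payoff_state_fun[OF \<sigma> \<tau>, of ?g n] by (simp add: stage_payoff_def)
  then have "\<forall>h\<in>{h. length h = Suc n}. hist_prob p m \<sigma> \<tau> h * ?g (fst (last h)) = 0"
    by (subst (asm) sum_nonneg_eq_0_iff) (auto simp: finite_lists_length hist_prob_nonneg[OF \<sigma> \<tau>])
  then show ?thesis
    using h null by auto
qed

lemma stage_payoff_cong_support:
  assumes "sender_strategy \<sigma>" "receiver_strategy \<tau>"
    and "\<And>s b. m s \<noteq> 0 \<Longrightarrow> f s b = g s b"
  shows "stage_payoff p m f \<sigma> \<tau> n = stage_payoff p m g \<sigma> \<tau> n"
  unfolding stage_payoff_def
  using hist_prob_null_state[OF assms(1,2)] assms(3) by (intro sum.cong) force+

lemma stage_payoff_abs_le: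
  assumes \<sigma>: "sender_strategy \<sigma>" and \<tau>: "receiver_strategy \<tau>"
    and f: "\<And>s b. \<bar>f s b\<bar> \<le> B"
  shows "\<bar>stage_payoff p m f \<sigma> \<tau> n\<bar> \<le> B"
proof -
  have "\<bar>stage_payoff p m f \<sigma> \<tau> n\<bar>
      \<le> (\<Sum>h\<in>{h. length h = Suc n}. \<bar>hist_prob p m \<sigma> \<tau> h * f (fst (last h)) (snd (snd (last h)))\<bar>)"
    unfolding stage_payoff_def by (rule sum_abs)
  also have "\<dots> \<le> (\<Sum>h\<in>{h. length h = Suc n}. hist_prob p m \<sigma> \<tau> h * B)"
    by (rule sum_mono) (simp add: abs_mult hist_prob_nonneg[OF \<sigma> \<tau>] f mult_left_mono)
  also have "\<dots> = B"
    using stage_payoff_state_fun[OF \<sigma> \<tau>, of "\<lambda>_. B" n]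
    by (simp add: stage_payoff_def sum_distrib_right[symmetric] sum_m)
  finally show ?thesis .
qed

lemma summable_discounted_stage_payoff:
  assumes \<sigma>: "sender_strategy \<sigma>" and \<tau>: "receiver_strategy \<tau>" and "0 \<le> \<delta>" "\<delta> < 1"
  shows "summable (\<lambda>n. (1 - \<delta>) * \<delta> ^ n * stage_payoff p m f \<sigma> \<tau> n)"
proof (rule summable_comparison_test)
  define B where "B = (\<Sum>s\<in>UNIV. \<Sum>b\<in>UNIV. \<bar>f s b\<bar>)"
  have bound: "\<bar>f s b\<bar> \<le> B" for s b
    unfolding B_def using member_le_sum[where i=b and f="\<lambda>b. \<bar>f s b\<bar>" and A=UNIV]
      member_le_sum[where i=s and f="\<lambda>s. \<Sum>b\<in>UNIV. \<bar>f s b\<bar>" and A=UNIV]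
    by (simp add: sum_nonneg)
  have "norm ((1 - \<delta>) * \<delta> ^ n * stage_payoff p m f \<sigma> \<tau> n) \<le> (1 - \<delta>) * B * \<delta> ^ n" for n
  proof -
    have "norm ((1 - \<delta>) * \<delta> ^ n * stage_payoff p m f \<sigma> \<tau> n) = (1 - \<delta>) * \<delta> ^ n * \<bar>stage_payoff p m f \<sigma> \<tau> n\<bar>"
      using assms by (simp add: abs_mult)
    also have "\<dots> \<le> (1 - \<delta>) * \<delta> ^ n * B"
      using assms stage_payoff_abs_le[OF \<sigma> \<tau> bound] by (intro mult_left_mono) simp_all
    finally show ?thesis by (simp add: mult_ac)
  qed
  then show "\<exists>N. \<forall>n\<ge>N. norm ((1 - \<delta>) * \<delta> ^ n * stage_payoff p m f \<sigma> \<tau> n) \<le> (1 - \<delta>) * B * \<delta> ^ n"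
    by blast
  show "summable (\<lambda>n. (1 - \<delta>) * B * \<delta> ^ n)"
    using assms by (intro summable_mult summable_geometric) simp
qed

end

section \<open>A fictitious state process coupled with the true one\<close>

text \<open>For \<mu> \<in> M, posterior m \<mu> x t is the conditional probability of the true state t
  given the reported state x (it is 0 when m x = 0, since division by zero yields 0).\<close>

definition posterior :: "('s \<Rightarrow> real) \<Rightarrow> ('s \<Rightarrow> 's \<Rightarrow> real) \<Rightarrow> 's \<Rightarrow> 's \<Rightarrow> real" where
  "posterior m \<mu> x t = \<mu> t x / m x"

text \<open>true_step x t is the probability that the next true state is t given the current fictitious
  state x, and fict_step x t x' the Bayes posterior of the next fictitious state x' given also the
  next true state t (an arbitrary kernel where that event is null).\<close>

definition true_step ::
  "('s::finite \<Rightarrow> 's \<Rightarrow> real) \<Rightarrow> ('s \<Rightarrow> real) \<Rightarrow> ('s \<Rightarrow> 's \<Rightarrow> real) \<Rightarrow> 's \<Rightarrow> 's \<Rightarrow> real" where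
  "true_step p m \<mu> x t = (\<Sum>x'\<in>UNIV. p x x' * posterior m \<mu> x' t)"

definition fict_step ::
  "('s::finite \<Rightarrow> 's \<Rightarrow> real) \<Rightarrow> ('s \<Rightarrow> real) \<Rightarrow> ('s \<Rightarrow> 's \<Rightarrow> real) \<Rightarrow> 's \<Rightarrow> 's \<Rightarrow> 's \<Rightarrow> real" where
  "fict_step p m \<mu> x t x' =
    (if true_step p m \<mu> x t = 0 then p x x' else p x x' * posterior m \<mu> x' t / true_step p m \<mu> x t)"

definition coupled_prob ::
  "('s::finite \<Rightarrow> 's \<Rightarrow> real) \<Rightarrow> ('s \<Rightarrow> real) \<Rightarrow> ('s \<Rightarrow> 's \<Rightarrow> real) \<Rightarrow> 's list \<Rightarrow> 's list \<Rightarrow> real" where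
  "coupled_prob p m \<mu> ss xs = (\<Prod>k<length ss. if k = 0 then \<mu> (ss ! 0) (xs ! 0)
      else p (ss ! (k - 1)) (ss ! k) * fict_step p m \<mu> (xs ! (k - 1)) (ss ! k) (xs ! k))"

lemma coupled_prob_Nil [simp]: "coupled_prob p m \<mu> [] xs = 1"
  by (simp add: coupled_prob_def)

lemma coupled_prob_snoc:
  assumes len: "length ss = length xs"
  shows "coupled_prob p m \<mu> (ss @ [s]) (xs @ [x]) = coupled_prob p m \<mu> ss xs *
    (if ss = [] then \<mu> s x else p (last ss) s * fict_step p m \<mu> (last xs) s x)"
proof -
  have prefix: "(\<Prod>k<length ss. if k = 0 then \<mu> ((ss @ [s]) ! 0) ((xs @ [x]) ! 0)
      else p ((ss @ [s]) ! (k - 1)) ((ss @ [s]) ! k)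
        * fict_step p m \<mu> ((xs @ [x]) ! (k - 1)) ((ss @ [s]) ! k) ((xs @ [x]) ! k))
    = coupled_prob p m \<mu> ss xs"
    unfolding coupled_prob_def using len by (intro prod.cong) (auto simp: nth_append)
  show ?thesis
    unfolding coupled_prob_def[of p m \<mu> "ss @ [s]"] length_append_singleton prod.lessThan_Suc prefix
    using len by (cases "ss = []") (auto simp: nth_append last_conv_nth)
qed

locale lazy_chain = stationary_chain +
  fixes c :: real
  assumes lazy: "\<And>t t'. p t t' = c * m t' + (if t = t' then 1 - c else 0)"

locale coupling = lazy_chain p m c for p :: "'s::finite \<Rightarrow> 's \<Rightarrow> real" and m c +
  fixes \<mu> :: "'s \<Rightarrow> 's \<Rightarrow> real"
  assumes \<mu>_in_Mset: "\<mu> \<in> Mset m"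
begin

lemma \<mu>_nonneg: "0 \<le> \<mu> s a"
  using \<mu>_in_Mset by (simp add: Mset_def)

lemma sum_\<mu>_row: "(\<Sum>a\<in>UNIV. \<mu> s a) = m s"
  using \<mu>_in_Mset by (simp add: Mset_def)

lemma sum_\<mu>_col: "(\<Sum>s\<in>UNIV. \<mu> s a) = m a"
  using \<mu>_in_Mset by (simp add: Mset_def)

lemma \<mu>_null: "m a = 0 \<Longrightarrow> \<mu> s a = 0"
  using member_le_sum[where i=s and f="\<lambda>s. \<mu> s a" and A=UNIV] \<mu>_nonneg[of s a]
  by (simp add: sum_\<mu>_col \<mu>_nonneg)

lemma posterior_nonneg: "0 \<le> posterior m \<mu> x t"
  by (simp add: posterior_def \<mu>_nonneg m_nonneg)

lemma m_mult_posterior: "m x * posterior m \<mu> x t = \<mu> t x"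
  by (cases "m x = 0") (auto simp: posterior_def \<mu>_null)

lemma sum_posterior: "m x \<noteq> 0 \<Longrightarrow> (\<Sum>t\<in>UNIV. posterior m \<mu> x t) = 1"
  by (simp add: posterior_def sum_divide_distrib[symmetric] sum_\<mu>_col)

text \<open>The key identity; it holds because p mixes the identity with resampling from m, and the
  posterior preserves m.\<close>

lemma posterior_commutes:
  assumes "m x \<noteq> 0"
  shows "(\<Sum>t\<in>UNIV. posterior m \<mu> x t * p t s) = true_step p m \<mu> x s"
proof -
  have "(\<Sum>t\<in>UNIV. posterior m \<mu> x t * p t s)
      = (\<Sum>t\<in>UNIV. c * m s * posterior m \<mu> x t + (if t = s then (1 - c) * posterior m \<mu> x t else 0))"
    by (rule sum.cong) (auto simp: lazy algebra_simps)
  also have "\<dots> = c * m s + (1 - c) * posterior m \<mu> x s"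
    by (simp add: sum.distrib sum_distrib_left[symmetric] sum_posterior[OF assms])
  also have "\<dots> = (\<Sum>x'\<in>UNIV. c * (m x' * posterior m \<mu> x' s)
      + (if x = x' then (1 - c) * posterior m \<mu> x' s else 0))"
    by (simp add: sum.distrib sum_distrib_left[symmetric] m_mult_posterior sum_\<mu>_row)
  also have "\<dots> = true_step p m \<mu> x s"
    unfolding true_step_def by (rule sum.cong) (auto simp: lazy algebra_simps)
  finally show ?thesis .
qed

lemma true_step_nonneg: "0 \<le> true_step p m \<mu> x t"
  unfolding true_step_def by (intro sum_nonneg mult_nonneg_nonneg p_nonneg posterior_nonneg)

lemma fict_step_nonneg: "0 \<le> fict_step p m \<mu> x t x'"
  unfolding fict_step_def using true_step_nonneg[of x t] by (simp add: p_nonneg posterior_nonneg)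

lemma sum_fict_step: "(\<Sum>x'\<in>UNIV. fict_step p m \<mu> x t x') = 1"
  by (cases "true_step p m \<mu> x t = 0")
    (simp_all add: fict_step_def sum_p sum_divide_distrib[symmetric] true_step_def[symmetric])

lemma true_step_mult_fict_step:
  "true_step p m \<mu> x t * fict_step p m \<mu> x t x' = p x x' * posterior m \<mu> x' t"
proof (cases "true_step p m \<mu> x t = 0")
  case True
  then have "\<forall>x'\<in>UNIV. p x x' * posterior m \<mu> x' t = 0"
    unfolding true_step_def
    by (subst (asm) sum_nonneg_eq_0_iff) (auto intro: mult_nonneg_nonneg p_nonneg posterior_nonneg)
  then show ?thesis
    using True by simp
qed (simp add: fict_step_def)

lemma coupled_prob_nonneg: "0 \<le> coupled_prob p m \<mu> ss xs"
  unfolding coupled_prob_def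
  by (intro prod_nonneg) (auto intro!: mult_nonneg_nonneg \<mu>_nonneg p_nonneg fict_step_nonneg)

lemma path_prob_nonneg: "0 \<le> path_prob p m xs"
  unfolding path_prob_def by (intro prod_nonneg) (auto simp: p_nonneg m_nonneg)

lemma path_prob_le_m_last: "xs \<noteq> [] \<Longrightarrow> path_prob p m xs \<le> m (last xs)"
proof (induction xs rule: rev_induct)
  case (snoc x xs)
  show ?case
  proof (cases "xs = []")
    case False
    have "path_prob p m (xs @ [x]) = path_prob p m xs * p (last xs) x"
      using False by (simp add: path_prob_snoc)
    also have "\<dots> \<le> m (last xs) * p (last xs) x"
      using snoc.IH[OF False] by (intro mult_right_mono p_nonneg)
    also have "\<dots> \<le> (\<Sum>t\<in>UNIV. m t * p t x)"
      by (rule member_le_sum) (auto intro: mult_nonneg_nonneg m_nonneg p_nonneg)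
    finally show ?thesis
      by (simp add: sum_m_mult_p)
  qed (use path_prob_snoc[of p m "[]" x] in simp)
qed simp

lemma sum_coupled_prob_snoc:
  assumes "length ss = length xs"
  shows "(\<Sum>x\<in>UNIV. coupled_prob p m \<mu> (ss @ [s]) (xs @ [x]))
    = coupled_prob p m \<mu> ss xs * (if ss = [] then m s else p (last ss) s)"
  using assms
  by (simp add: coupled_prob_snoc sum_distrib_left[symmetric] sum_\<mu>_row sum_fict_step)

lemma posterior_propagates:
  assumes "m x \<noteq> 0"
  shows "(\<Sum>t\<in>UNIV. posterior m \<mu> x t * (\<Sum>s\<in>UNIV. p t s * fict_step p m \<mu> x s x' * \<phi> s))
    = p x x' * (\<Sum>s\<in>UNIV. posterior m \<mu> x' s * \<phi> s)"
proof -
  have "(\<Sum>t\<in>UNIV. posterior m \<mu> x t * (\<Sum>s\<in>UNIV. p t s * fict_step p m \<mu> x s x' * \<phi> s))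
      = (\<Sum>s\<in>UNIV. (\<Sum>t\<in>UNIV. posterior m \<mu> x t * p t s) * fict_step p m \<mu> x s x' * \<phi> s)"
    unfolding sum_distrib_left sum_distrib_right by (subst sum.swap) (simp add: mult_ac)
  also have "\<dots> = (\<Sum>s\<in>UNIV. true_step p m \<mu> x s * fict_step p m \<mu> x s x' * \<phi> s)"
    by (simp add: posterior_commutes[OF assms])
  also have "\<dots> = p x x' * (\<Sum>s\<in>UNIV. posterior m \<mu> x' s * \<phi> s)"
    by (simp add: true_step_mult_fict_step sum_distrib_left mult_ac)
  finally show ?thesis .
qed

lemma sum_coupled_prob_true_states:
  assumes "length xs = Suc n"
  shows "(\<Sum>ss\<in>{ss. length ss = Suc n}. coupled_prob p m \<mu> ss xs * \<phi> (last ss))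
       = path_prob p m xs * (\<Sum>t\<in>UNIV. posterior m \<mu> (last xs) t * \<phi> t)"
  using assms
proof (induction n arbitrary: xs \<phi>)
  case 0
  then obtain x where x: "xs = [x]"
    by (metis length_0_conv length_Suc_conv)
  have "(\<Sum>ss\<in>{ss. length ss = Suc 0}. coupled_prob p m \<mu> ss xs * \<phi> (last ss)) = (\<Sum>t\<in>UNIV. \<mu> t x * \<phi> t)"
    using coupled_prob_snoc[of "[]" "[]" p m \<mu>] by (simp add: sum_lists_length_Suc lists_length_0 x)
  also have "\<dots> = m x * (\<Sum>t\<in>UNIV. posterior m \<mu> x t * \<phi> t)"
    by (simp add: sum_distrib_left mult.assoc[symmetric] m_mult_posterior)
  finally show ?case
    using path_prob_snoc[of p m "[]" x] by (simp add: x)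
next
  case (Suc n)
  obtain xs0 x' where xs: "xs = xs0 @ [x']" and len: "length xs0 = Suc n"
    using Suc.prems by (metis length_Suc_conv_rev)
  let ?x = "last xs0"
  let ?\<phi>' = "\<lambda>t. \<Sum>s\<in>UNIV. p t s * fict_step p m \<mu> ?x s x' * \<phi> s"
  have "(\<Sum>ss\<in>{ss. length ss = Suc (Suc n)}. coupled_prob p m \<mu> ss xs * \<phi> (last ss))
      = (\<Sum>ss\<in>{ss. length ss = Suc n}. coupled_prob p m \<mu> ss xs0 * ?\<phi>' (last ss))"
    unfolding sum_lists_length_Suc[of _ "Suc n"] xs
  proof (intro sum.cong refl)
    fix ss :: "'s list" assume "ss \<in> {ss. length ss = Suc n}"
    then have "length ss = length xs0" "ss \<noteq> []"
      using len by auto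
    then show "(\<Sum>s\<in>UNIV. coupled_prob p m \<mu> (ss @ [s]) (xs0 @ [x']) * \<phi> (last (ss @ [s])))
        = coupled_prob p m \<mu> ss xs0 * ?\<phi>' (last ss)"
      by (simp add: coupled_prob_snoc sum_distrib_left mult_ac)
  qed
  also have "\<dots> = path_prob p m xs0 * (\<Sum>t\<in>UNIV. posterior m \<mu> ?x t * ?\<phi>' t)"
    by (rule Suc.IH[OF len])
  also have "\<dots> = path_prob p m xs * (\<Sum>t\<in>UNIV. posterior m \<mu> x' t * \<phi> t)"
  proof (cases "m ?x = 0")
    case True
    then have "path_prob p m xs0 = 0"
      using len path_prob_le_m_last[of xs0] path_prob_nonneg[of xs0] by fastforce
    then show ?thesis
      by (simp add: xs path_prob_snoc)
  next
    case False
    moreover have "xs0 \<noteq> []"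
      using len by auto
    ultimately show ?thesis
      by (simp add: posterior_propagates xs path_prob_snoc)
  qed
  finally show ?case
    using xs by simp
qed

end

section \<open>The sender's deviation\<close>

text \<open>Against \<tau>, the sender imitates \<sigma> on a fictitious state path. Given the history h and the
  current true state s, the fictitious path xs (one entry longer than h) is weighted by its joint
  probability with the true states and by the probability that \<sigma> and \<tau> produce the observed
  messages and actions on it; the message is then drawn from \<sigma> at the last fictitious state.
  If all weights vanish, the sender reports truthfully (an arbitrary choice).\<close>

definition dev_weight ::
  "('s::finite \<Rightarrow> 's \<Rightarrow> real) \<Rightarrow> ('s \<Rightarrow> real) \<Rightarrow> ('s \<Rightarrow> 's \<Rightarrow> real)
    \<Rightarrow> ('s, 'b) sender_strategy \<Rightarrow> ('s, 'b) receiver_strategy \<Rightarrow> ('s \<times> 's \<times> 'b) list \<Rightarrow> 's \<Rightarrow> 's list \<Rightarrow> real" where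
  "dev_weight p m \<mu> \<sigma> \<tau> h s xs =
    coupled_prob p m \<mu> (map fst h @ [s]) xs * strategy_prob \<sigma> \<tau> (zip (butlast xs) (map snd h))"

definition deviation ::
  "('s::finite \<Rightarrow> 's \<Rightarrow> real) \<Rightarrow> ('s \<Rightarrow> real) \<Rightarrow> ('s \<Rightarrow> 's \<Rightarrow> real)
    \<Rightarrow> ('s, 'b) sender_strategy \<Rightarrow> ('s, 'b) receiver_strategy \<Rightarrow> ('s, 'b) sender_strategy" where
  "deviation p m \<mu> \<sigma> \<tau> h s a =
    (let X = {xs. length xs = Suc (length h)};
         D = (\<Sum>xs\<in>X. dev_weight p m \<mu> \<sigma> \<tau> h s xs)
     in if D = 0 then of_bool (a = s)
        else (\<Sum>xs\<in>X. dev_weight p m \<mu> \<sigma> \<tau> h s xs * \<sigma> (zip (butlast xs) (map snd h)) (last xs) a) / D)"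

definition deviation_prob ::
  "('s::finite \<Rightarrow> 's \<Rightarrow> real) \<Rightarrow> ('s \<Rightarrow> real) \<Rightarrow> ('s \<Rightarrow> 's \<Rightarrow> real)
    \<Rightarrow> ('s, 'b) sender_strategy \<Rightarrow> ('s, 'b) receiver_strategy \<Rightarrow> ('s \<times> 's \<times> 'b) list \<Rightarrow> real" where
  "deviation_prob p m \<mu> \<sigma> \<tau> h = (\<Sum>xs\<in>{xs. length xs = length h}.
    coupled_prob p m \<mu> (map fst h) xs * strategy_prob \<sigma> \<tau> (zip xs (map snd h)))"

context coupling
begin

context
  fixes \<sigma> :: "('s, 'b::finite) sender_strategy" and \<tau> :: "('s, 'b) receiver_strategy"
  assumes \<sigma>: "sender_strategy \<sigma>" and \<tau>: "receiver_strategy \<tau>"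
begin

lemma dev_weight_nonneg: "0 \<le> dev_weight p m \<mu> \<sigma> \<tau> h s xs"
  unfolding dev_weight_def by (intro mult_nonneg_nonneg coupled_prob_nonneg strategy_prob_nonneg[OF \<sigma> \<tau>])

lemma sum_dev_weight:
  "(\<Sum>xs\<in>{xs. length xs = Suc (length h)}. dev_weight p m \<mu> \<sigma> \<tau> h s xs)
    = (if h = [] then m s else p (fst (last h)) s) * deviation_prob p m \<mu> \<sigma> \<tau> h"
proof -
  have "(\<Sum>x\<in>UNIV. dev_weight p m \<mu> \<sigma> \<tau> h s (xs @ [x]))
      = (if h = [] then m s else p (fst (last h)) s)
        * (coupled_prob p m \<mu> (map fst h) xs * strategy_prob \<sigma> \<tau> (zip xs (map snd h)))"
    if "length xs = length h" for xs
  proof -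
    have "(\<Sum>x\<in>UNIV. dev_weight p m \<mu> \<sigma> \<tau> h s (xs @ [x]))
        = strategy_prob \<sigma> \<tau> (zip xs (map snd h)) * (\<Sum>x\<in>UNIV. coupled_prob p m \<mu> (map fst h @ [s]) (xs @ [x]))"
      by (simp add: dev_weight_def sum_distrib_left mult_ac)
    then show ?thesis
      using that by (simp add: sum_coupled_prob_snoc last_map mult_ac)
  qed
  then show ?thesis
    unfolding deviation_prob_def sum_lists_length_Suc sum_distrib_left by (intro sum.cong) auto
qed

lemma deviation_prob_snoc:
  "deviation_prob p m \<mu> \<sigma> \<tau> (h @ [(s, a, b)]) =
    (\<Sum>xs\<in>{xs. length xs = Suc (length h)}.
      dev_weight p m \<mu> \<sigma> \<tau> h s xs * \<sigma> (zip (butlast xs) (map snd h)) (last xs) a) * \<tau> (map snd h) a b"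
proof -
  let ?X = "{xs. length xs = length h}"
  have "deviation_prob p m \<mu> \<sigma> \<tau> (h @ [(s, a, b)]) = (\<Sum>xs\<in>?X. \<Sum>x\<in>UNIV.
      coupled_prob p m \<mu> (map fst h @ [s]) (xs @ [x]) * strategy_prob \<sigma> \<tau> (zip (xs @ [x]) (map snd h @ [(a, b)])))"
    unfolding deviation_prob_def by (simp add: sum_lists_length_Suc)
  also have "\<dots> = (\<Sum>xs\<in>?X. \<Sum>x\<in>UNIV. dev_weight p m \<mu> \<sigma> \<tau> h s (xs @ [x])
      * \<sigma> (zip (butlast (xs @ [x])) (map snd h)) (last (xs @ [x])) a * \<tau> (map snd h) a b)"
    by (intro sum.cong refl) (simp add: dev_weight_def strategy_prob_snoc mult_ac)
  finally show ?thesis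
    by (simp add: sum_lists_length_Suc sum_distrib_right)
qed

lemma sender_strategy_deviation: "sender_strategy (deviation p m \<mu> \<sigma> \<tau>)"
  unfolding sender_strategy_def distribution_def
proof (intro allI conjI)
  fix h :: "('s \<times> 's \<times> 'b) list" and s a
  let ?X = "{xs. length xs = Suc (length h)}"
  let ?D = "\<Sum>xs\<in>?X. dev_weight p m \<mu> \<sigma> \<tau> h s xs"
  let ?N = "\<lambda>a. \<Sum>xs\<in>?X. dev_weight p m \<mu> \<sigma> \<tau> h s xs * \<sigma> (zip (butlast xs) (map snd h)) (last xs) a"
  show "0 \<le> deviation p m \<mu> \<sigma> \<tau> h s a"
    unfolding deviation_def Let_def
    by (auto intro!: divide_nonneg_nonneg sum_nonneg mult_nonneg_nonneg dev_weight_nonneg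
        sender_strategy_nonneg[OF \<sigma>])
  have "(\<Sum>a\<in>UNIV. ?N a) = ?D"
    by (subst sum.swap) (simp add: sum_distrib_left[symmetric] sum_sender_strategy[OF \<sigma>])
  then show "(\<Sum>a\<in>UNIV. deviation p m \<mu> \<sigma> \<tau> h s a) = 1"
    by (cases "?D = 0") (simp_all add: deviation_def Let_def sum_divide_distrib[symmetric])
qed

lemma hist_prob_deviation:
  "hist_prob p m (deviation p m \<mu> \<sigma> \<tau>) \<tau> h = deviation_prob p m \<mu> \<sigma> \<tau> h"
proof (induction h rule: rev_induct)
  case Nil
  then show ?case
    by (simp add: deviation_prob_def lists_length_0 strategy_prob_def)
next
  case (snoc x h)
  obtain s a b where x: "x = (s, a, b)"
    by (cases x)
  let ?X = "{xs. length xs = Suc (length h)}"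
  let ?D = "\<Sum>xs\<in>?X. dev_weight p m \<mu> \<sigma> \<tau> h s xs"
  let ?N = "\<Sum>xs\<in>?X. dev_weight p m \<mu> \<sigma> \<tau> h s xs * \<sigma> (zip (butlast xs) (map snd h)) (last xs) a"
  let ?step = "if h = [] then m s else p (fst (last h)) s"
  have "hist_prob p m (deviation p m \<mu> \<sigma> \<tau>) \<tau> (h @ [x])
      = ?step * deviation_prob p m \<mu> \<sigma> \<tau> h * deviation p m \<mu> \<sigma> \<tau> h s a * \<tau> (map snd h) a b"
    unfolding x hist_prob_snoc snoc.IH public_hist_eq_map_snd by (simp add: mult_ac)
  also have "\<dots> = ?D * deviation p m \<mu> \<sigma> \<tau> h s a * \<tau> (map snd h) a b"
    by (simp add: sum_dev_weight)
  also have "?D * deviation p m \<mu> \<sigma> \<tau> h s a = ?N"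
  proof (cases "?D = 0")
    case True
    have "?N \<le> ?D"
      by (rule sum_mono) (simp add: dev_weight_nonneg sender_strategy_le_1[OF \<sigma>] mult_left_le)
    moreover have "0 \<le> ?N"
      by (intro sum_nonneg mult_nonneg_nonneg dev_weight_nonneg sender_strategy_nonneg[OF \<sigma>])
    ultimately show ?thesis
      using True by simp
  qed (simp add: deviation_def Let_def)
  finally show ?case
    unfolding x deviation_prob_snoc .
qed

lemma stage_payoff_deviation:
  "stage_payoff p m v (deviation p m \<mu> \<sigma> \<tau>) \<tau> n
    = stage_payoff p m (\<lambda>x b. \<Sum>t\<in>UNIV. posterior m \<mu> x t * v t b) \<sigma> \<tau> n"
proof -
  let ?L = "{xs::'s list. length xs = Suc n}" and ?AB = "{ab::('s \<times> 'b) list. length ab = Suc n}"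
  let ?F = "\<lambda>x b. \<Sum>t\<in>UNIV. posterior m \<mu> x t * v t b"
  have "stage_payoff p m v (deviation p m \<mu> \<sigma> \<tau>) \<tau> n
      = (\<Sum>ss\<in>?L. \<Sum>ab\<in>?AB. deviation_prob p m \<mu> \<sigma> \<tau> (zip ss ab) * v (last ss) (snd (last ab)))"
    unfolding stage_payoff_def hist_prob_deviation by (rule sum_lists_length_Suc_zip)
  also have "\<dots> = (\<Sum>ss\<in>?L. \<Sum>ab\<in>?AB. \<Sum>xs\<in>?L.
      strategy_prob \<sigma> \<tau> (zip xs ab) * (coupled_prob p m \<mu> ss xs * v (last ss) (snd (last ab))))"
    unfolding deviation_prob_def sum_distrib_right by (intro sum.cong refl) (auto simp: mult_ac)
  also have "\<dots> = (\<Sum>ab\<in>?AB. \<Sum>xs\<in>?L.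
      strategy_prob \<sigma> \<tau> (zip xs ab) * (\<Sum>ss\<in>?L. coupled_prob p m \<mu> ss xs * v (last ss) (snd (last ab))))"
    by (subst sum.swap, rule sum.cong[OF refl], subst sum.swap) (simp add: sum_distrib_left)
  also have "\<dots> = (\<Sum>ab\<in>?AB. \<Sum>xs\<in>?L.
      strategy_prob \<sigma> \<tau> (zip xs ab) * (path_prob p m xs * ?F (last xs) (snd (last ab))))"
  proof (intro sum.cong refl)
    fix ab :: "('s \<times> 'b) list" and xs assume "xs \<in> ?L"
    then show "strategy_prob \<sigma> \<tau> (zip xs ab) * (\<Sum>ss\<in>?L. coupled_prob p m \<mu> ss xs * v (last ss) (snd (last ab)))
        = strategy_prob \<sigma> \<tau> (zip xs ab) * (path_prob p m xs * ?F (last xs) (snd (last ab)))"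
      using sum_coupled_prob_true_states[of xs n "\<lambda>t. v t (snd (last ab))"] by simp
  qed
  also have "\<dots> = (\<Sum>xs\<in>?L. \<Sum>ab\<in>?AB. hist_prob p m \<sigma> \<tau> (zip xs ab) * ?F (last xs) (snd (last ab)))"
    by (subst sum.swap) (intro sum.cong refl, simp add: hist_prob_eq_path_prob_mult mult_ac)
  also have "\<dots> = stage_payoff p m ?F \<sigma> \<tau> n"
    unfolding stage_payoff_def by (rule sum_lists_length_Suc_zip[symmetric])
  finally show ?thesis .
qed

end

end

section \<open>The one-shot strategy induced by an equilibrium\<close>

lemma suminf_discounted_const:
  fixes \<delta> K :: real
  assumes "0 \<le> \<delta>" "\<delta> < 1"
  shows "(\<Sum>n. (1 - \<delta>) * \<delta> ^ n * K) = K"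
proof -
  have "(\<Sum>n. \<delta> ^ n * ((1 - \<delta>) * K)) = (\<Sum>n. \<delta> ^ n) * ((1 - \<delta>) * K)"
    using assms by (intro suminf_mult2[symmetric] summable_geometric) simp
  then show ?thesis
    using assms by (simp add: suminf_geometric mult_ac)
qed

definition occupation ::
  "('s::finite \<Rightarrow> 's \<Rightarrow> real) \<Rightarrow> ('s \<Rightarrow> real) \<Rightarrow> real
    \<Rightarrow> ('s, 'b::finite) sender_strategy \<Rightarrow> ('s, 'b) receiver_strategy \<Rightarrow> 's \<Rightarrow> 'b \<Rightarrow> real" where
  "occupation p m \<delta> \<sigma> \<tau> s b =
    (\<Sum>n. (1 - \<delta>) * \<delta> ^ n * stage_payoff p m (\<lambda>s' b'. of_bool (s' = s \<and> b' = b)) \<sigma> \<tau> n)"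

text \<open>The paper's y: the discounted conditional law of the action given the state (an arbitrary
  point mass on null states).\<close>

definition induced_response ::
  "('s::finite \<Rightarrow> 's \<Rightarrow> real) \<Rightarrow> ('s \<Rightarrow> real) \<Rightarrow> real
    \<Rightarrow> ('s, 'b::finite) sender_strategy \<Rightarrow> ('s, 'b) receiver_strategy \<Rightarrow> 's \<Rightarrow> 'b \<Rightarrow> real" where
  "induced_response p m \<delta> \<sigma> \<tau> a b =
    (if m a = 0 then of_bool (b = undefined) else occupation p m \<delta> \<sigma> \<tau> a b / m a)"

context stationary_chain
begin

context
  fixes \<sigma> :: "('s, 'b::finite) sender_strategy" and \<tau> :: "('s, 'b) receiver_strategy" and \<delta> :: real
  assumes \<sigma>: "sender_strategy \<sigma>" and \<tau>: "receiver_strategy \<tau>" and \<delta>: "0 \<le> \<delta>" "\<delta> < 1"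
begin

lemma disc_payoff_eq_sum_occupation:
  "disc_payoff p m \<delta> f \<sigma> \<tau> = (\<Sum>s\<in>UNIV. \<Sum>b\<in>UNIV. occupation p m \<delta> \<sigma> \<tau> s b * f s b)"
proof -
  note summable = summable_discounted_stage_payoff[OF \<sigma> \<tau> \<delta>]
  have "disc_payoff p m \<delta> f \<sigma> \<tau> = (\<Sum>n. \<Sum>s\<in>UNIV. \<Sum>b\<in>UNIV.
      (1 - \<delta>) * \<delta> ^ n * stage_payoff p m (\<lambda>s' b'. of_bool (s' = s \<and> b' = b)) \<sigma> \<tau> n * f s b)"
    unfolding disc_payoff_def
    by (subst stage_payoff_eq_sum_indicator) (simp add: sum_distrib_left mult_ac)
  also have "\<dots> = (\<Sum>s\<in>UNIV. \<Sum>b\<in>UNIV. occupation p m \<delta> \<sigma> \<tau> s b * f s b)"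
    unfolding occupation_def
    by (simp add: suminf_sum summable_sum summable_mult2 summable suminf_mult2[OF summable])
  finally show ?thesis .
qed

lemma sum_occupation: "(\<Sum>b\<in>UNIV. occupation p m \<delta> \<sigma> \<tau> a b) = m a"
proof -
  have "disc_payoff p m \<delta> (\<lambda>s b. of_bool (s = a)) \<sigma> \<tau>
      = (\<Sum>s\<in>UNIV. if s = a then \<Sum>b\<in>UNIV. occupation p m \<delta> \<sigma> \<tau> s b else 0)"
    unfolding disc_payoff_eq_sum_occupation by (intro sum.cong) auto
  then have "(\<Sum>b\<in>UNIV. occupation p m \<delta> \<sigma> \<tau> a b) = disc_payoff p m \<delta> (\<lambda>s b. of_bool (s = a)) \<sigma> \<tau>"
    by simp
  also have "\<dots> = m a"
    by (simp add: disc_payoff_def stage_payoff_state_fun[OF \<sigma> \<tau>] suminf_discounted_const[OF \<delta>]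
        of_bool_def if_distrib cong: if_cong)
  finally show ?thesis .
qed

lemma distribution_induced_response: "distribution (induced_response p m \<delta> \<sigma> \<tau> a)"
proof (cases "m a = 0")
  case False
  have "0 \<le> occupation p m \<delta> \<sigma> \<tau> a b" for b
    unfolding occupation_def using \<delta>
    by (intro suminf_nonneg summable_discounted_stage_payoff[OF \<sigma> \<tau> \<delta>] mult_nonneg_nonneg)
      (simp_all add: stage_payoff_def sum_nonneg hist_prob_nonneg[OF \<sigma> \<tau>])
  then show ?thesis
    using False m_nonneg[of a]
    by (simp add: distribution_def induced_response_def sum_divide_distrib[symmetric] sum_occupation)
qed (simp add: distribution_def induced_response_def)

end

end

context coupling
begin

context
  fixes \<sigma> :: "('s, 'b::finite) sender_strategy" and \<tau> :: "('s, 'b) receiver_strategy" and \<delta> :: real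
  assumes \<sigma>: "sender_strategy \<sigma>" and \<tau>: "receiver_strategy \<tau>" and \<delta>: "0 \<le> \<delta>" "\<delta> < 1"
begin

lemma Upay_induced_response:
  "Upay v \<mu> (induced_response p m \<delta> \<sigma> \<tau>)
    = disc_payoff p m \<delta> (\<lambda>x b. \<Sum>t\<in>UNIV. posterior m \<mu> x t * v t b) \<sigma> \<tau>"
proof -
  let ?occ = "occupation p m \<delta> \<sigma> \<tau>"
  have weight: "\<mu> s a * induced_response p m \<delta> \<sigma> \<tau> a b = posterior m \<mu> a s * ?occ a b" for s a b
    by (auto simp: induced_response_def posterior_def \<mu>_null)
  have "Upay v \<mu> (induced_response p m \<delta> \<sigma> \<tau>)
      = (\<Sum>s\<in>UNIV. \<Sum>a\<in>UNIV. \<Sum>b\<in>UNIV. ?occ a b * (posterior m \<mu> a s * v s b))"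
    unfolding Upay_def sum_distrib_left mult.assoc[symmetric] weight by (simp add: mult_ac)
  also have "\<dots> = (\<Sum>a\<in>UNIV. \<Sum>b\<in>UNIV. ?occ a b * (\<Sum>t\<in>UNIV. posterior m \<mu> a t * v t b))"
    by (subst sum.swap, rule sum.cong[OF refl], subst sum.swap) (simp add: sum_distrib_left)
  finally show ?thesis
    by (simp add: disc_payoff_eq_sum_occupation[OF \<sigma> \<tau> \<delta>])
qed

lemma Upay_induced_response_eq_deviation:
  "Upay v \<mu> (induced_response p m \<delta> \<sigma> \<tau>) = disc_payoff p m \<delta> v (deviation p m \<mu> \<sigma> \<tau>) \<tau>"
  by (simp add: Upay_induced_response disc_payoff_def stage_payoff_deviation[OF \<sigma> \<tau>])

end

end

context lazy_chain
begin

lemma mu0_in_Mset: "mu0 m \<in> Mset m"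
  by (auto simp: Mset_def mu0_def m_nonneg)

lemma disc_payoff_eq_Upay_truthful:
  assumes \<sigma>: "sender_strategy \<sigma>" and \<tau>: "receiver_strategy \<tau>" and \<delta>: "0 \<le> \<delta>" "\<delta> < 1"
  shows "disc_payoff p m \<delta> v \<sigma> \<tau> = Upay v (mu0 m) (induced_response p m \<delta> \<sigma> \<tau>)"
proof -
  interpret truthful: coupling p m c "mu0 m"
    by unfold_locales (rule mu0_in_Mset)
  have "stage_payoff p m v \<sigma> \<tau> n
      = stage_payoff p m (\<lambda>x b. \<Sum>t\<in>UNIV. posterior m (mu0 m) x t * v t b) \<sigma> \<tau> n" for n
  proof (rule stage_payoff_cong_support[OF \<sigma> \<tau>])
    fix x b assume "m x \<noteq> 0"
    then have "posterior m (mu0 m) x t = of_bool (t = x)" for t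
      by (simp add: posterior_def mu0_def)
    then show "v x b = (\<Sum>t\<in>UNIV. posterior m (mu0 m) x t * v t b)"
      by simp
  qed
  then show ?thesis
    by (simp add: truthful.Upay_induced_response[OF \<sigma> \<tau> \<delta>] disc_payoff_def)
qed

end

lemma (in stationary_chain) disc_payoff_constant_response:
  fixes \<sigma> :: "('s, 'b::finite) sender_strategy"
  assumes \<sigma>: "sender_strategy \<sigma>" and \<delta>: "0 \<le> \<delta>" "\<delta> < 1"
  shows "disc_payoff p m \<delta> v \<sigma> (\<lambda>_ _. \<lambda>b'. of_bool (b' = b)) = (\<Sum>s\<in>UNIV. m s * v s b)"
proof -
  let ?\<tau> = "(\<lambda>_ _. \<lambda>b'. of_bool (b' = b)) :: ('s, 'b) receiver_strategy"
  have \<tau>: "receiver_strategy ?\<tau>"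
    by (simp add: receiver_strategy_def distribution_def)
  have "stage_payoff p m v \<sigma> ?\<tau> n = stage_payoff p m (\<lambda>s _. v s b) \<sigma> ?\<tau> n" for n
    unfolding stage_payoff_def
  proof (intro sum.cong refl)
    fix h :: "('s \<times> 's \<times> 'b) list" assume "h \<in> {h. length h = Suc n}"
    then obtain h0 s a b' where "h = h0 @ [(s, a, b')]"
      by (auto simp: length_Suc_conv_rev)
    then show "hist_prob p m \<sigma> ?\<tau> h * v (fst (last h)) (snd (snd (last h)))
        = hist_prob p m \<sigma> ?\<tau> h * v (fst (last h)) b"
      by (cases "b' = b") (simp_all add: hist_prob_snoc)
  qed
  then show ?thesis
    by (simp add: disc_payoff_def stage_payoff_state_fun[OF \<sigma> \<tau>] suminf_discounted_const[OF \<delta>])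
qed

context lazy_chain
begin

lemma v2_le_equilibrium_payoff:
  assumes eq: "nash_eq p m \<delta> u1 u2 \<sigma> \<tau>" and \<delta>: "0 \<le> \<delta>" "\<delta> < 1"
  shows "v2 m u2 \<le> disc_payoff p m \<delta> u2 \<sigma> \<tau>"
proof -
  have "v2 m u2 \<in> range (\<lambda>b. \<Sum>s\<in>UNIV. m s * u2 s b)"
    unfolding v2_def by (rule Max_in) auto
  then obtain b where b: "v2 m u2 = (\<Sum>s\<in>UNIV. m s * u2 s b)"
    by blast
  let ?\<tau> = "(\<lambda>_ _. \<lambda>b'. of_bool (b' = b)) :: ('s, 'b) receiver_strategy"
  have "receiver_strategy ?\<tau>"
    by (simp add: receiver_strategy_def distribution_def)
  with eq have "disc_payoff p m \<delta> u2 \<sigma> ?\<tau> \<le> disc_payoff p m \<delta> u2 \<sigma> \<tau>"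
    unfolding nash_eq_def by blast
  with eq show ?thesis
    by (simp add: b disc_payoff_constant_response[OF _ \<delta>] nash_eq_def)
qed

lemma sender_incentive_constraint:
  assumes eq: "nash_eq p m \<delta> u1 u2 \<sigma> \<tau>" and \<delta>: "0 \<le> \<delta>" "\<delta> < 1" and \<mu>: "\<mu> \<in> Mset m"
  shows "Upay u1 \<mu> (induced_response p m \<delta> \<sigma> \<tau>) \<le> Upay u1 (mu0 m) (induced_response p m \<delta> \<sigma> \<tau>)"
proof -
  interpret coupling p m c \<mu>
    using \<mu> by unfold_locales
  from eq have \<sigma>: "sender_strategy \<sigma>" and \<tau>: "receiver_strategy \<tau>"
    by (simp_all add: nash_eq_def)
  have "Upay u1 \<mu> (induced_response p m \<delta> \<sigma> \<tau>) = disc_payoff p m \<delta> u1 (deviation p m \<mu> \<sigma> \<tau>) \<tau>"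
    by (rule Upay_induced_response_eq_deviation[OF \<sigma> \<tau> \<delta>])
  also have "\<dots> \<le> disc_payoff p m \<delta> u1 \<sigma> \<tau>"
    using eq sender_strategy_deviation[OF \<sigma> \<tau>] by (simp add: nash_eq_def)
  finally show ?thesis
    by (simp add: disc_payoff_eq_Upay_truthful[OF \<sigma> \<tau> \<delta>])
qed

end

theorem theorem2:
  fixes p :: "'s::finite \<Rightarrow> 's \<Rightarrow> real"
    and m :: "'s \<Rightarrow> real"
    and u1 u2 :: "'s \<Rightarrow> 'b::finite \<Rightarrow> real"
    and \<delta> :: real
  assumes "stochastic_matrix p"
    and "irreducible_chain p"
    and "aperiodic_chain p"
    and "invariant_measure p m"
    and "assumption_A p"
    and "0 < \<delta>" and "\<delta> < 1"
  shows "NE p m \<delta> u1 u2 \<subseteq> EM m u1 u2"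
proof
  fix x assume "x \<in> NE p m \<delta> u1 u2"
  then obtain \<sigma> \<tau> where x: "x = (disc_payoff p m \<delta> u1 \<sigma> \<tau>, disc_payoff p m \<delta> u2 \<sigma> \<tau>)"
    and eq: "nash_eq p m \<delta> u1 u2 \<sigma> \<tau>"
    by (auto simp: NE_def)
  then have \<sigma>: "sender_strategy \<sigma>" and \<tau>: "receiver_strategy \<tau>"
    by (simp_all add: nash_eq_def)
  have \<delta>: "0 \<le> \<delta>" "\<delta> < 1"
    using assms(6,7) by simp_all
  interpret stationary_chain p m
    using assms(1,4) by unfold_locales
  obtain c where "\<And>t t'. p t t' = c * m t' + (if t = t' then 1 - c else 0)"
    using assumption_A_lazy_form[OF assms(5)] by blast
  then interpret lazy_chain p m c
    by unfold_locales
  let ?y = "induced_response p m \<delta> \<sigma> \<tau>"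
  have "\<forall>a. distribution (?y a)"
    using distribution_induced_response[OF \<sigma> \<tau> \<delta>] by blast
  moreover have "\<forall>\<mu>\<in>Mset m. Upay u1 \<mu> ?y \<le> Upay u1 (mu0 m) ?y"
    using sender_incentive_constraint[OF eq \<delta>] by blast
  moreover have "v2 m u2 \<le> Upay u2 (mu0 m) ?y"
    using v2_le_equilibrium_payoff[OF eq \<delta>] disc_payoff_eq_Upay_truthful[OF \<sigma> \<tau> \<delta>] by simp
  ultimately show "x \<in> EM m u1 u2"
    unfolding EM_def x disc_payoff_eq_Upay_truthful[OF \<sigma> \<tau> \<delta>] by (intro CollectI exI[of _ ?y]) simp
qed

end
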